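(* Let $\mathbf{Z}\in\mathbb{R}^{m\times n}$ ($m\ge n$) have SVD $\mathbf{Z}=\bar{\mathbf{U}}\,\mathrm{Diag}(\sigma(\mathbf{Z}))\bar{\mathbf{V}}^\top$ with $\bar{\mathbf{U}}\in\mathbb{R}^{m\times n}$, $\bar{\mathbf{V}}\in\mathbb{R}^{n\times n}$ having orthonormal columns and $\sigma(\mathbf{Z})=(\sigma_1(\mathbf{Z}),\dots,\sigma_n(\mathbf{Z}))$, $\sigma_1(\mathbf{Z})\ge\cdots\ge\sigma_n(\mathbf{Z})\ge0$, and let $0<\lambda\le\sigma_1(\mathbf{Z})$. Consider the vector problem $$\min_{\mathbf{s}\in\mathbb{R}^n}\ \tfrac12\|\mathbf{s}-\sigma(\mathbf{Z})\|_2^2+\lambda\big(\|\mathbf{s}\|_1-\|\mathbf{s}\|_2\big)$$ and the matrix problem $$\min_{\mathbf{X}\in\mathbb{R}^{m\times n}}\ \tfrac12\|\mathbf{X}-\mathbf{Z}\|_F^2+\lambda\big(\|\mathbf{X}\|_*-\|\mathbf{X}\|_F\big).$$ Then the vector problem has a minimizer $\tilde{\mathbf{s}}$ with $\tilde s_1\ge\tilde s_2\ge\cdots\ge\tilde s_n\ge0$, and for every such minimizer, $\bar{\mathbf{U}}\,\mathrm{Diag}(\tilde{\mathbf{s}})\bar{\mathbf{V}}^\top$ is a minimizer of the matrix problem; moreover the two problems have the same optimal value.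
   Context: $\|\mathbf{X}\|_*$ is the nuclear norm (sum of singular values) and $\|\mathbf{X}\|_F$ the Frobenius norm. The regularizer $r_{\text{NNFN}}(\mathbf{X})=\|\mathbf{X}\|_*-\|\mathbf{X}\|_F$ is called the "nuclear norm minus Frobenius norm" (NNFN) regularizer, and $\|\mathbf{s}\|_1-\|\mathbf{s}\|_2$ is the $\ell_{1\text{-}2}$ penalty; the two problems are the proximal problems of $\lambda r_{\text{NNFN}}$ at $\mathbf{Z}$ and of $\lambda\|\cdot\|_{1\text{-}2}$ at $\sigma(\mathbf{Z})$. *)

theory Defs
  imports "HOL-Analysis.Analysis"
begin

definition Diag :: "real^'n \<Rightarrow> real^'n^'n" where
  "Diag s = (\<chi> i j. if i = j then s $ i else 0)"

definition frob_norm :: "real^'n^'m \<Rightarrow> real" where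
  "frob_norm X = sqrt (\<Sum>i\<in>UNIV. \<Sum>j\<in>UNIV. (X $ i $ j)^2)"

definition l1_norm :: "real^'n \<Rightarrow> real" where
  "l1_norm s = (\<Sum>i\<in>UNIV. \<bar>s $ i\<bar>)"

definition l2_norm :: "real^'n \<Rightarrow> real" where
  "l2_norm s = sqrt (\<Sum>i\<in>UNIV. (s $ i)^2)"

definition is_svd :: "real^'n^'m \<Rightarrow> real^'n^'m \<Rightarrow> real^'n \<Rightarrow> real^'n^'n \<Rightarrow> bool" where
  "is_svd X U s V \<longleftrightarrow> transpose U ** U = mat 1 \<and> transpose V ** V = mat 1
     \<and> (\<forall>i. 0 \<le> s $ i) \<and> X = U ** Diag s ** transpose V"

text \<open>Nuclear norm: the sum of the singular values (well defined since the
  multiset of singular values does not depend on the chosen SVD).\<close>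
definition nuclear_norm :: "real^'n^'m \<Rightarrow> real" where
  "nuclear_norm X = (SOME t. \<exists>U s V. is_svd X U s V \<and> t = (\<Sum>i\<in>UNIV. s $ i))"

definition vec_obj :: "real \<Rightarrow> real^'n \<Rightarrow> real^'n \<Rightarrow> real" where
  "vec_obj lam z s = (1/2) * (l2_norm (s - z))^2 + lam * (l1_norm s - l2_norm s)"

definition mat_obj :: "real \<Rightarrow> real^'n^'m \<Rightarrow> real^'n^'m \<Rightarrow> real" where
  "mat_obj lam Z X = (1/2) * (frob_norm (X - Z))^2 + lam * (nuclear_norm X - frob_norm X)"

end

theory Submission
  imports Defs
begin

text \<open>If X = P Diag(x) Q^T is a singular value decomposition, then the Frobenius and nuclear
  norms of X are the l2 and l1 norms of x, so the matrix objective at X and the vector objective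
  at the decreasing rearrangement of x differ only in the cross terms <X, Z> and <x, sigma(Z)>.
  Von Neumann's trace inequality <X, Z> \<le> <x, sigma(Z)> therefore bounds the matrix objective
  from below by the vector one, and the bound is attained at U Diag(s) V^T. A minimiser s of the
  coercive vector objective can be taken nonnegative and decreasing, because replacing s by the
  sorted |s| leaves both norms unchanged and can only increase <s, sigma(Z)>.\<close>

section \<open>Matrices of the form U Diag(s) V^T\<close>

definition outer_prod :: "real^'m \<Rightarrow> real^'n \<Rightarrow> real^'n^'m" where
  "outer_prod p q = (\<chi> a b. p$a * q$b)"

lemma frob_norm_eq_norm: "frob_norm X = norm X"
  by (simp add: frob_norm_def norm_eq_sqrt_inner inner_vec_def power2_eq_square)

lemma l2_norm_eq_norm: "l2_norm s = norm s"
  by (simp add: l2_norm_def norm_eq_sqrt_inner inner_vec_def power2_eq_square)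

lemma matrix_mul_Diag_component: "(P ** Diag x) $ a $ k = P$a$k * x$k"
  by (simp add: matrix_matrix_mult_def Diag_def if_distrib[of "\<lambda>t. P$a$_ * t"] cong: if_cong)

lemma Diag_matrix_eq_sum_outer_prod:
  "P ** Diag x ** transpose Q = (\<Sum>i\<in>UNIV. x$i *\<^sub>R outer_prod (column i P) (column i Q))"
  by (simp add: vec_eq_iff matrix_matrix_mult_def[of "P ** Diag x"] matrix_mul_Diag_component
      transpose_def outer_prod_def column_def sum_component mult_ac)

lemma inner_outer_prod: "outer_prod p q \<bullet> outer_prod u v = (p \<bullet> u) * (q \<bullet> v)"
  by (simp add: outer_prod_def inner_vec_def sum_product mult_ac) (rule sum.swap)

lemma inner_columns:
  fixes P :: "real^'n^'m"
  shows "column i P \<bullet> column j P = (transpose P ** P) $ i $ j"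
  by (simp add: matrix_matrix_mult_def transpose_def column_def inner_vec_def)

lemma orthonormal_columns:
  fixes P :: "real^'n^'m"
  assumes "transpose P ** P = mat 1"
  shows "column i P \<bullet> column j P = (if i = j then 1 else 0)"
  using assms inner_columns[of i P j] by (simp add: mat_def)

lemma inner_Diag_matrices:
  "(P ** Diag x ** transpose Q) \<bullet> (U ** Diag y ** transpose V)
   = (\<Sum>i\<in>UNIV. \<Sum>j\<in>UNIV. x$i * y$j * ((column i P \<bullet> column j U) * (column i Q \<bullet> column j V)))"
  unfolding Diag_matrix_eq_sum_outer_prod inner_sum_left
  by (simp add: inner_sum_right inner_outer_prod mult.assoc sum_distrib_left mult.left_commute)

lemma inner_Diag_matrices_same_frame:
  assumes "transpose U ** U = mat 1" "transpose V ** V = mat 1"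
  shows "(U ** Diag x ** transpose V) \<bullet> (U ** Diag y ** transpose V) = x \<bullet> y"
proof -
  have "(U ** Diag x ** transpose V) \<bullet> (U ** Diag y ** transpose V) = (\<Sum>i\<in>UNIV. x$i * y$i)"
    unfolding inner_Diag_matrices
    by (simp add: orthonormal_columns[OF assms(1)] orthonormal_columns[OF assms(2)] if_distrib
        cong: if_cong)
  then show ?thesis by (simp add: inner_vec_def)
qed

lemma norm_Diag_matrix:
  assumes "transpose U ** U = mat 1" "transpose V ** V = mat 1"
  shows "norm (U ** Diag s ** transpose V) = norm s"
  using inner_Diag_matrices_same_frame[OF assms, of s s] by (simp add: norm_eq_sqrt_inner)

lemma Diag_matrix_diff:
  "U ** Diag x ** transpose V - U ** Diag y ** transpose V = U ** Diag (x - y) ** transpose V"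
  by (simp add: Diag_matrix_eq_sum_outer_prod scaleR_diff_left sum_subtractf)

section \<open>Von Neumann's trace inequality\<close>

lemma bessel_inequality:
  fixes u :: "'i \<Rightarrow> 'a::real_inner"
  assumes "finite I" and "\<And>i j. i \<in> I \<Longrightarrow> j \<in> I \<Longrightarrow> u i \<bullet> u j = (if i = j then 1 else 0)"
  shows "(\<Sum>j\<in>I. (p \<bullet> u j)^2) \<le> p \<bullet> p"
proof -
  define w where "w = (\<Sum>j\<in>I. (p \<bullet> u j) *\<^sub>R u j)"
  have pw: "p \<bullet> w = (\<Sum>j\<in>I. (p \<bullet> u j)^2)"
    by (simp add: w_def inner_sum_right power2_eq_square)
  have "w \<bullet> w = (\<Sum>i\<in>I. \<Sum>j\<in>I. (p \<bullet> u i) * (p \<bullet> u j) * (u i \<bullet> u j))"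
    unfolding w_def inner_sum_left
    by (simp add: inner_sum_right mult.assoc sum_distrib_left mult.left_commute)
  also have "\<dots> = (\<Sum>i\<in>I. \<Sum>j\<in>I. if j = i then (p \<bullet> u i)^2 else 0)"
    using assms(2) by (intro sum.cong refl) (auto simp: power2_eq_square)
  also have "\<dots> = (\<Sum>j\<in>I. (p \<bullet> u j)^2)"
    using assms(1) by simp
  finally have ww: "w \<bullet> w = (\<Sum>j\<in>I. (p \<bullet> u j)^2)" .
  have "0 \<le> (p - w) \<bullet> (p - w)" by simp
  also have "\<dots> = p \<bullet> p - 2 * (p \<bullet> w) + w \<bullet> w"
    by (simp add: inner_diff_left inner_diff_right inner_commute)
  finally show ?thesis using pw ww by linarith
qed

lemma mult_le_mean_squares: "(a::real) * b \<le> (a^2 + b^2) / 2"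
  using sum_squares_bound[of a b] by simp

lemma mean_squared_coefficients_le_1:
  fixes u :: "'i::finite \<Rightarrow> 'a::real_inner" and v :: "'i \<Rightarrow> 'b::real_inner"
  assumes "\<And>i j. u i \<bullet> u j = (if i = j then 1 else 0)"
    and "\<And>i j. v i \<bullet> v j = (if i = j then 1 else 0)"
    and "p \<bullet> p = 1" "q \<bullet> q = 1"
  shows "(\<Sum>j\<in>UNIV. ((p \<bullet> u j)^2 + (q \<bullet> v j)^2) / 2) \<le> 1"
proof -
  have "(\<Sum>j\<in>UNIV. ((p \<bullet> u j)^2 + (q \<bullet> v j)^2) / 2)
      = ((\<Sum>j\<in>UNIV. (p \<bullet> u j)^2) + (\<Sum>j\<in>UNIV. (q \<bullet> v j)^2)) / 2"
    by (simp only: sum_divide_distrib[symmetric] sum.distrib)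
  also have "\<dots> \<le> (p \<bullet> p + q \<bullet> q) / 2"
    using bessel_inequality[of UNIV u p] bessel_inequality[of UNIV v q] assms(1,2) by simp
  finally show ?thesis using assms(3,4) by simp
qed

lemma card_less_strict_mono: "strict_mono (\<lambda>i::'n::{finite,linorder}. card {j. j < i})"
proof
  fix i i' :: 'n assume "i < i'"
  then have "{j. j < i} \<subset> {j. j < i'}" by auto
  then show "card {j. j < i} < card {j. j < i'}" by (intro psubset_card_mono) auto
qed

lemma card_less_bij: "bij_betw (\<lambda>i::'n::{finite,linorder}. card {j. j < i}) UNIV {..<CARD('n)}"
proof -
  have "card {j. j < i} < CARD('n)" for i :: 'n
    by (intro psubset_card_mono) auto
  moreover have inj: "inj (\<lambda>i::'n. card {j. j < i})"
    using strict_mono_imp_inj_on card_less_strict_mono by blast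
  ultimately have "(\<lambda>i::'n. card {j. j < i}) ` UNIV = {..<CARD('n)}"
    by (intro card_subset_eq) (auto simp: card_image)
  then show ?thesis using inj by (simp add: bij_betw_def)
qed

lemma sorting_permutation_exists:
  fixes f :: "'n::{finite,linorder} \<Rightarrow> real"
  obtains \<pi> :: "'n \<Rightarrow> 'n" where "bij \<pi>" "antimono (f \<circ> \<pi>)"
proof -
  obtain xs :: "'n list" where xs: "distinct xs" "set xs = UNIV"
    using finite_distinct_list[of "UNIV :: 'n set"] by auto
  define L where "L = sort_key (\<lambda>i. - f i) xs"
  have L: "distinct L" "set L = UNIV" "sorted (map (\<lambda>i. - f i) L)" "length L = CARD('n)"
    using xs distinct_card[of xs] by (auto simp: L_def)
  define r where "r = (\<lambda>i::'n. card {j. j < i})"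
  have r_bij: "bij_betw r UNIV {..<CARD('n)}"
    unfolding r_def by (rule card_less_bij)
  then have r_less: "r i < CARD('n)" for i
    by (auto simp: bij_betw_def)
  show ?thesis
  proof
    show "bij ((!) L \<circ> r)"
      using bij_betw_trans[OF r_bij bij_betw_nth[OF L(1)]] L(2,4) by simp
    show "antimono (f \<circ> ((!) L \<circ> r))"
    proof
      fix i j :: 'n assume "i \<le> j"
      then have "r i \<le> r j"
        unfolding r_def by (rule monoD[OF strict_mono_mono[OF card_less_strict_mono]])
      then have "map (\<lambda>i. - f i) L ! r i \<le> map (\<lambda>i. - f i) L ! r j"
        using sorted_nth_mono[OF L(3)] r_less L(4) by simp
      then show "(f \<circ> ((!) L \<circ> r)) j \<le> (f \<circ> ((!) L \<circ> r)) i"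
        using r_less L(4) by simp
    qed
  qed
qed

lemma weighted_sum_le_sum_atMost:
  fixes a w :: "'n::{finite,linorder} \<Rightarrow> real"
  assumes "antimono a" "\<And>i. 0 \<le> a i"
    and "\<And>i. 0 \<le> w i" "\<And>i. w i \<le> 1" "sum w UNIV \<le> real (card {..l})"
  shows "(\<Sum>i\<in>UNIV. a i * w i) \<le> sum a {..l}"
proof -
  have split: "sum h UNIV = sum h {..l} + sum h {l<..}" for h :: "'n \<Rightarrow> real"
    by (subst sum.union_disjoint[symmetric]) (auto intro: sum.cong)
  have "(\<Sum>i\<in>{..l}. a i * (w i - 1)) \<le> (\<Sum>i\<in>{..l}. a l * (w i - 1))"
    using assms(1,4) by (intro sum_mono mult_right_mono_neg) (auto dest: antimonoD)
  moreover have "(\<Sum>i\<in>{l<..}. a i * w i) \<le> (\<Sum>i\<in>{l<..}. a l * w i)"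
    using assms(1,3) by (intro sum_mono mult_right_mono) (auto simp: antimono_def intro: less_imp_le)
  moreover have "a l * (sum w UNIV - real (card {..l})) \<le> 0"
    using assms(2,5) by (simp add: mult_nonneg_nonpos)
  ultimately show ?thesis
    by (simp add: split[of "\<lambda>i. a i * w i"] split[of w] algebra_simps sum_subtractf
        sum_distrib_left)
qed

lemma Max_mult_sum_le_sum_mult:
  fixes g b :: "'a::linorder \<Rightarrow> real"
  assumes "finite A" "A \<noteq> {}" "antimono b"
    and "\<And>x. x \<in> A \<Longrightarrow> 0 \<le> sum g {j\<in>A. j \<le> x}"
  shows "b (Max A) * sum g A \<le> (\<Sum>j\<in>A. b j * g j)"
  using assms(1,2,4)
proof (induction A rule: finite_linorder_max_induct)
  case empty then show ?case by simp
next
  case (insert c A)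
  show ?case
  proof (cases "A = {}")
    case True then show ?thesis by simp
  next
    case False
    have prefix: "{j \<in> insert c A. j \<le> x} = {j\<in>A. j \<le> x}" if "x \<in> A" for x
      using insert that by auto
    have IH: "b (Max A) * sum g A \<le> (\<Sum>j\<in>A. b j * g j)"
    proof (rule insert.IH[OF False])
      show "0 \<le> sum g {j\<in>A. j \<le> x}" if "x \<in> A" for x
        using insert.prems(2)[of x] prefix[OF that] that by simp
    qed
    have "Max A \<in> A" "{j\<in>A. j \<le> Max A} = A" using False insert by auto
    then have "0 \<le> sum g A" using insert.prems(2)[of "Max A"] prefix by auto
    moreover have "b c \<le> b (Max A)"
      using \<open>Max A \<in> A\<close> insert.hyps(2) by (intro antimonoD[OF assms(3)]) auto
    ultimately have "b c * sum g A \<le> b (Max A) * sum g A" by (simp add: mult_right_mono)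
    moreover have "Max (insert c A) = c" using insert False by (intro Max_eqI) auto
    moreover have "c \<notin> A" using insert.hyps(2) by auto
    ultimately show ?thesis using IH insert.hyps(1) by (simp add: distrib_left)
  qed
qed

lemma sum_mult_nonneg_if_prefix_sums_nonneg:
  fixes g b :: "'n::{finite,linorder} \<Rightarrow> real"
  assumes "\<And>l. 0 \<le> sum g {..l}" "antimono b" "\<And>i. 0 \<le> b i"
  shows "0 \<le> (\<Sum>j\<in>UNIV. b j * g j)"
proof -
  have "{..Max (UNIV::'n set)} = UNIV" by auto
  then have "0 \<le> b (Max UNIV) * sum g UNIV" using assms(1,3) by (metis mult_nonneg_nonneg)
  also have "\<dots> \<le> (\<Sum>j\<in>UNIV. b j * g j)"
    using assms(1,2) by (intro Max_mult_sum_le_sum_mult) (auto simp: atMost_def)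
  finally show ?thesis .
qed

lemma sum_permute_UNIV:
  assumes "bij \<pi>"
  shows "(\<Sum>k\<in>UNIV. h (\<pi> k)) = (\<Sum>i\<in>UNIV. h i)"
  using sum.reindex_bij_betw[of \<pi> UNIV UNIV h] assms by (simp add: bij_def)

text \<open>The prefix sums of F j = \<Sum>i. a i * M i j are dominated by those of the sorted a,
  which Abel summation against the decreasing s turns into the claim.\<close>
lemma doubly_substochastic_sum_le_sorted:
  fixes a s :: "'n::{finite,linorder} \<Rightarrow> real" and M :: "'n \<Rightarrow> 'n \<Rightarrow> real"
  assumes "\<And>i. 0 \<le> a i" "bij \<pi>" "antimono (a \<circ> \<pi>)" "antimono s" "\<And>i. 0 \<le> s i"
    and "\<And>i j. 0 \<le> M i j" "\<And>i. (\<Sum>j\<in>UNIV. M i j) \<le> 1" "\<And>j. (\<Sum>i\<in>UNIV. M i j) \<le> 1"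
  shows "(\<Sum>i\<in>UNIV. \<Sum>j\<in>UNIV. a i * s j * M i j) \<le> (\<Sum>k\<in>UNIV. a (\<pi> k) * s k)"
proof -
  define F where "F j = (\<Sum>i\<in>UNIV. a i * M i j)" for j
  have prefix: "sum F {..l} \<le> (\<Sum>k\<in>{..l}. a (\<pi> k))" for l
  proof -
    define w where "w i = (\<Sum>j\<in>{..l}. M i j)" for i
    have "w i \<le> (\<Sum>j\<in>UNIV. M i j)" for i
      unfolding w_def using assms(6) by (intro sum_mono2) auto
    then have w_le_1: "w i \<le> 1" for i
      using assms(7) order_trans by blast
    have "sum w UNIV = (\<Sum>j\<in>{..l}. \<Sum>i\<in>UNIV. M i j)"
      unfolding w_def by (rule sum.swap)
    also have "\<dots> \<le> real (card {..l})"
      using sum_mono[of "{..l}" "\<lambda>j. \<Sum>i\<in>UNIV. M i j" "\<lambda>_. 1"] assms(8) by simp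
    finally have w_sum: "sum w UNIV \<le> real (card {..l})" .
    have "sum F {..l} = (\<Sum>i\<in>UNIV. a i * w i)"
      unfolding F_def w_def by (simp add: sum_distrib_left) (rule sum.swap)
    also have "\<dots> = (\<Sum>k\<in>UNIV. a (\<pi> k) * w (\<pi> k))"
      using sum_permute_UNIV[OF assms(2), of "\<lambda>i. a i * w i"] by simp
    also have "\<dots> \<le> (\<Sum>k\<in>{..l}. a (\<pi> k))"
      using assms(1,3,6) w_le_1 w_sum sum_permute_UNIV[OF assms(2), of w]
      by (intro weighted_sum_le_sum_atMost[of "a \<circ> \<pi>" "w \<circ> \<pi>", simplified])
        (auto simp: w_def sum_nonneg)
    finally show ?thesis .
  qed
  have "0 \<le> (\<Sum>j\<in>UNIV. s j * (a (\<pi> j) - F j))"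
    using prefix assms(4,5)
    by (intro sum_mult_nonneg_if_prefix_sums_nonneg) (auto simp: sum_subtractf)
  moreover have "(\<Sum>j\<in>UNIV. s j * F j) = (\<Sum>i\<in>UNIV. \<Sum>j\<in>UNIV. a i * s j * M i j)"
    unfolding F_def by (simp add: sum_distrib_left mult_ac) (rule sum.swap)
  ultimately show ?thesis by (simp add: algebra_simps sum_subtractf)
qed

lemma rearrangement_inequality:
  fixes a s :: "'n::{finite,linorder} \<Rightarrow> real"
  assumes "\<And>i. 0 \<le> a i" "bij \<pi>" "antimono (a \<circ> \<pi>)" "antimono s" "\<And>i. 0 \<le> s i"
  shows "(\<Sum>i\<in>UNIV. a i * s i) \<le> (\<Sum>k\<in>UNIV. a (\<pi> k) * s k)"
  using doubly_substochastic_sum_le_sorted[OF assms, of "\<lambda>i j. of_bool (i = j)"]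
  by simp

text \<open>By 2ab \<le> a^2 + b^2 the coupling coefficients of the two frames are dominated by a matrix
  whose row and column sums are at most 1 (Bessel).\<close>
theorem von_neumann_trace_inequality:
  fixes P U :: "((real, 'n::{finite,linorder}) vec, 'm::finite) vec"
    and Q V :: "((real, 'n) vec, 'k::finite) vec"
  assumes "transpose P ** P = mat 1" "transpose Q ** Q = mat 1"
    and "transpose U ** U = mat 1" "transpose V ** V = mat 1"
    and "\<And>i. 0 \<le> x$i" "bij \<pi>" "antimono (\<lambda>k. x $ \<pi> k)"
    and "\<And>i. 0 \<le> y$i" "antimono (\<lambda>k. y$k)"
  shows "(P ** Diag x ** transpose Q) \<bullet> (U ** Diag y ** transpose V)
    \<le> (\<Sum>k\<in>UNIV. x $ \<pi> k * y$k)"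
proof -
  define p where "p i = column i P" for i
  define q where "q i = column i Q" for i
  define u where "u i = column i U" for i
  define v where "v i = column i V" for i
  note orth = orthonormal_columns[OF assms(1), folded p_def]
    orthonormal_columns[OF assms(2), folded q_def] orthonormal_columns[OF assms(3), folded u_def]
    orthonormal_columns[OF assms(4), folded v_def]
  define M where "M i j = ((p i \<bullet> u j)^2 + (q i \<bullet> v j)^2) / 2" for i j
  have "(P ** Diag x ** transpose Q) \<bullet> (U ** Diag y ** transpose V)
      = (\<Sum>i\<in>UNIV. \<Sum>j\<in>UNIV. x$i * y$j * ((p i \<bullet> u j) * (q i \<bullet> v j)))"
    unfolding inner_Diag_matrices p_def q_def u_def v_def ..
  also have "\<dots> \<le> (\<Sum>i\<in>UNIV. \<Sum>j\<in>UNIV. x$i * y$j * M i j)"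
    unfolding M_def using assms(5,8)
    by (intro sum_mono mult_left_mono mult_le_mean_squares mult_nonneg_nonneg)
  also have "\<dots> \<le> (\<Sum>k\<in>UNIV. x $ \<pi> k * y$k)"
  proof (rule doubly_substochastic_sum_le_sorted[of "\<lambda>i. x$i" \<pi> "\<lambda>j. y$j" M])
    show "(\<Sum>j\<in>UNIV. M i j) \<le> 1" for i
      unfolding M_def using orth by (intro mean_squared_coefficients_le_1) auto
    show "(\<Sum>i\<in>UNIV. M i j) \<le> 1" for j
      unfolding M_def using orth
      by (subst (1 2) inner_commute) (intro mean_squared_coefficients_le_1, auto)
  qed (use assms(5-9) in \<open>auto simp: M_def comp_def\<close>)
  finally show ?thesis .
qed

section \<open>Existence of the singular value decomposition\<close>

lemma matrix_vector_mult_adjoint: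
  fixes A :: "real^'n^'m"
  shows "(A *v x) \<bullet> y = x \<bullet> (transpose A *v y)"
  by (metis dot_lmul_matrix inner_commute transpose_matrix_vector)

lemma quadratic_nonpos_imp_linear_coeff_zero:
  fixes c d :: real
  assumes "\<And>t. 2 * t * c + t^2 * d \<le> 0"
  shows "c = 0"
proof -
  define e where "e = \<bar>d\<bar> + 1"
  have "e > 0" "2 * e + d > 0" by (auto simp: e_def)
  have "e^2 * (2 * (c / e) * c + (c / e)^2 * d) \<le> 0"
    using assms[of "c / e"] by (simp add: mult_nonneg_nonpos)
  also have "e^2 * (2 * (c / e) * c + (c / e)^2 * d) = c^2 * (2 * e + d)"
    using \<open>e > 0\<close> by (simp add: field_simps power2_eq_square)
  finally have "c^2 \<le> 0"
    using \<open>2 * e + d > 0\<close> by (simp add: mult_le_0_iff)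
  then show ?thesis by simp
qed

lemma rayleigh_maximizer_is_eigenvector:
  fixes A :: "real^'n^'n"
  assumes sym: "transpose A = A" and S: "subspace S" "\<And>x. x \<in> S \<Longrightarrow> A *v x \<in> S"
    and v: "v \<in> S" "v \<bullet> v = 1"
    and max: "\<And>y. y \<in> S \<Longrightarrow> y \<bullet> (A *v y) \<le> (v \<bullet> (A *v v)) * (y \<bullet> y)"
  shows "A *v v = (v \<bullet> (A *v v)) *\<^sub>R v"
proof -
  define M where "M = v \<bullet> (A *v v)"
  have symm: "x \<bullet> (A *v y) = (A *v x) \<bullet> y" for x y
    using matrix_vector_mult_adjoint[of A x y] sym by simp
  have perp: "w \<bullet> (A *v v) = 0" if w: "w \<in> S" "w \<bullet> v = 0" for w
  proof (rule quadratic_nonpos_imp_linear_coeff_zero)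
    fix t :: real
    have "v + t *\<^sub>R w \<in> S" using w v S by (simp add: subspace_add subspace_scale)
    then have "(v + t *\<^sub>R w) \<bullet> (A *v (v + t *\<^sub>R w)) \<le> M * ((v + t *\<^sub>R w) \<bullet> (v + t *\<^sub>R w))"
      unfolding M_def by (rule max)
    then show "2 * t * (w \<bullet> (A *v v)) + t^2 * (w \<bullet> (A *v w) - M * (w \<bullet> w)) \<le> 0"
      using symm[of v w] v(2) w(2)
      by (simp add: M_def matrix_vector_right_distrib matrix_vector_mult_scaleR inner_add_left
          inner_add_right inner_commute power2_eq_square algebra_simps)
  qed
  define w where "w = A *v v - M *\<^sub>R v"
  have "w \<in> S" unfolding w_def using S v by (simp add: subspace_diff subspace_scale)
  moreover have "w \<bullet> v = 0"
    unfolding w_def M_def using v(2) by (simp add: inner_diff_right inner_commute)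
  moreover have "w \<bullet> w = w \<bullet> (A *v v) - M * (w \<bullet> v)"
    by (subst (2) w_def) (simp add: inner_diff_right)
  ultimately have "w \<bullet> w = 0"
    using perp by simp
  then show ?thesis by (simp add: w_def M_def)
qed

lemma rayleigh_maximizer_exists:
  fixes A :: "real^'n^'n"
  assumes "subspace S" "S \<noteq> {0}"
  obtains v where "v \<in> S" "v \<bullet> v = 1" "\<And>y. y \<in> S \<Longrightarrow> y \<bullet> (A *v y) \<le> (v \<bullet> (A *v v)) * (y \<bullet> y)"
proof -
  define K where "K = sphere 0 1 \<inter> S"
  define f where "f x = x \<bullet> (A *v x)" for x
  have normalized: "(1 / norm x) *\<^sub>R x \<in> K" if "x \<in> S" "x \<noteq> 0" for x
    using that assms(1) by (auto simp: K_def subspace_scale)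
  have "compact K"
    unfolding K_def using closed_subspace[OF assms(1)] by (intro compact_Int_closed) auto
  moreover have "K \<noteq> {}"
    using assms subspace_0 normalized by blast
  moreover have "continuous_on K f"
    unfolding f_def by (intro continuous_intros linear_continuous_on matrix_vector_mul_bounded_linear)
  ultimately obtain v where v: "v \<in> K" and vmax: "\<And>y. y \<in> K \<Longrightarrow> f y \<le> f v"
    using continuous_attains_sup by metis
  show ?thesis
  proof
    show "v \<in> S" "v \<bullet> v = 1" using v by (auto simp: K_def norm_eq_1)
    show "y \<bullet> (A *v y) \<le> (v \<bullet> (A *v v)) * (y \<bullet> y)" if "y \<in> S" for y
    proof (cases "y = 0")
      case False
      have "f ((1 / norm y) *\<^sub>R y) \<le> f v" using vmax normalized[OF that False] by blast
      then have "f y \<le> f v * (norm y)^2"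
        using False by (simp add: f_def matrix_vector_mult_scaleR field_simps power2_eq_square)
      then show ?thesis by (simp add: f_def power2_norm_eq_inner)
    qed simp
  qed
qed

lemma dim_orthogonal_complement_in_subspace:
  fixes v :: "'a::euclidean_space"
  assumes "subspace S" "v \<in> S" "v \<noteq> 0"
  shows "dim {y \<in> S. v \<bullet> y = 0} + 1 = dim S"
proof -
  have "{y \<in> S. v \<bullet> y = 0} = {y \<in> S. \<forall>x\<in>span {v}. orthogonal x y}"
  proof (intro Collect_cong conj_cong refl iffI)
    show "\<forall>x\<in>span {v}. orthogonal x y" if "v \<bullet> y = 0" for y
      using that orthogonal_to_span[of _ "{v}" y]
      by (auto simp: orthogonal_def inner_commute)
  qed (auto simp: orthogonal_def span_base)
  moreover have "span {v} \<subseteq> S"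
    using assms by (simp add: span_minimal)
  ultimately have "dim {y \<in> S. v \<bullet> y = 0} + dim (span {v}) = dim S"
    using assms(1) dim_subspace_orthogonal_to_vectors[of "span {v}" S] by simp
  then show ?thesis
    using assms(3) by simp
qed

lemma symmetric_matrix_eigenbasis_of_invariant_subspace:
  fixes A :: "real^'n^'n"
  assumes sym: "transpose A = A" and "subspace S" "\<And>x. x \<in> S \<Longrightarrow> A *v x \<in> S"
  shows "\<exists>B. B \<subseteq> S \<and> pairwise orthogonal B \<and> (\<forall>x\<in>B. norm x = 1)
      \<and> (\<forall>x\<in>B. \<exists>\<mu>. A *v x = \<mu> *\<^sub>R x) \<and> card B = dim S"
  using assms(2,3)
proof (induction "dim S" arbitrary: S rule: less_induct)
  case less
  show ?case
  proof (cases "S = {0}")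
    case True
    then show ?thesis by (intro exI[of _ "{}"]) auto
  next
    case False
    obtain v where v: "v \<in> S" "v \<bullet> v = 1"
      and max: "\<And>y. y \<in> S \<Longrightarrow> y \<bullet> (A *v y) \<le> (v \<bullet> (A *v v)) * (y \<bullet> y)"
      using rayleigh_maximizer_exists[OF less.prems(1) False] by metis
    obtain \<mu> where eig: "A *v v = \<mu> *\<^sub>R v"
      using rayleigh_maximizer_is_eigenvector[OF sym less.prems v max] by blast
    define S' where "S' = {y \<in> S. v \<bullet> y = 0}"
    have "subspace S'"
      unfolding S'_def using subspace_inter[OF less.prems(1) subspace_hyperplane[of v]]
      by (simp add: Collect_conj_eq Int_commute)
    have dim_S': "dim S' + 1 = dim S"
      unfolding S'_def using less.prems(1) v by (intro dim_orthogonal_complement_in_subspace) auto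
    have "A *v y \<in> S'" if "y \<in> S'" for y
    proof -
      have "v \<bullet> (A *v y) = (A *v v) \<bullet> y" using matrix_vector_mult_adjoint[of A v y] sym by simp
      also have "\<dots> = 0" using that by (simp add: S'_def eig)
      finally show ?thesis using that less.prems(2) by (simp add: S'_def)
    qed
    then obtain B where B: "B \<subseteq> S'" "pairwise orthogonal B" "\<forall>x\<in>B. norm x = 1"
        "\<forall>x\<in>B. \<exists>\<mu>. A *v x = \<mu> *\<^sub>R x" "card B = dim S'"
      using less.hyps[of S'] dim_S' \<open>subspace S'\<close> by auto
    have "v \<notin> B" using B(1) v(2) by (force simp: S'_def)
    then have "card (insert v B) = dim S"
      using pairwise_orthogonal_imp_finite[OF B(2)] B(5) dim_S' by simp
    moreover have "pairwise orthogonal (insert v B)"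
      using B(1) by (intro pairwise_orthogonal_insert[OF B(2)]) (auto simp: S'_def orthogonal_def)
    ultimately show ?thesis
      using B v eig by (intro exI[of _ "insert v B"]) (auto simp: S'_def norm_eq_1)
  qed
qed

lemma symmetric_matrix_orthonormal_eigenvectors:
  fixes A :: "real^'n^'n"
  assumes "transpose A = A"
  obtains q :: "'n \<Rightarrow> real^'n" and \<mu> where
    "\<And>i j. q i \<bullet> q j = (if i = j then 1 else 0)" "\<And>i. A *v q i = \<mu> i *\<^sub>R q i"
proof -
  obtain B where B: "pairwise orthogonal B" "\<forall>x\<in>B. norm x = 1"
      "\<forall>x\<in>B. \<exists>\<mu>. A *v x = \<mu> *\<^sub>R x" "card B = CARD('n)"
    using symmetric_matrix_eigenbasis_of_invariant_subspace[OF assms subspace_UNIV] by auto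
  obtain q where q: "bij_betw q (UNIV::'n set) B"
    using bij_betw_iff_card[of "UNIV::'n set" B] pairwise_orthogonal_imp_finite[OF B(1)] B(4)
    by auto
  have qB: "q i \<in> B" for i
    using q by (auto simp: bij_betw_def)
  have q_eq_iff: "q i = q j \<longleftrightarrow> i = j" for i j
    using q by (auto simp: bij_betw_def inj_on_def)
  have "\<forall>i. \<exists>\<mu>. A *v q i = \<mu> *\<^sub>R q i"
    using B(3) qB by blast
  then obtain \<mu> where "\<And>i. A *v q i = \<mu> i *\<^sub>R q i"
    by metis
  moreover have "q i \<bullet> q j = (if i = j then 1 else 0)" for i j
    using B(1,2) qB q_eq_iff by (auto simp: pairwise_def orthogonal_def norm_eq_1)
  ultimately show ?thesis
    using that by blast
qed

lemma orthonormal_family_extend: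
  fixes p :: "'i::finite \<Rightarrow> real^'m"
  assumes "CARD('i) \<le> CARD('m)"
    and p: "\<And>i j. i \<in> I \<Longrightarrow> j \<in> I \<Longrightarrow> p i \<bullet> p j = (if i = j then 1 else 0)"
  obtains p' where "\<And>i. i \<in> I \<Longrightarrow> p' i = p i" "\<And>i j. p' i \<bullet> p' j = (if i = j then 1 else 0)"
proof -
  define C where "C = {y. \<forall>z\<in>span (p ` I). orthogonal z y}"
  have "dim C + dim (span (p ` I)) = CARD('m)"
    unfolding C_def using dim_subspace_orthogonal_to_vectors[of "span (p ` I)" UNIV]
    by (simp add: subspace_span)
  moreover have "dim (span (p ` I)) \<le> card I"
    using dim_le_card[of "span (p ` I)" "p ` I"] card_image_le[of I p] by (simp add: span_superset)
  moreover have "subspace C"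
    unfolding C_def by (rule subspace_orthogonal_to_vectors)
  then obtain D where D: "D \<subseteq> C" "pairwise orthogonal D" "\<And>x. x \<in> D \<Longrightarrow> norm x = 1"
      "card D = dim C"
    using orthonormal_basis_subspace by blast
  ultimately have "card (UNIV - I) \<le> card D"
    using assms(1) by (simp add: card_Diff_subset)
  then obtain g where g: "g ` (UNIV - I) \<subseteq> D" "inj_on g (UNIV - I)"
    using card_le_inj[of "UNIV - I" D] pairwise_orthogonal_imp_finite[OF D(2)] by auto
  define p' where "p' i = (if i \<in> I then p i else g i)" for i
  have cross: "p i \<bullet> g j = 0" if "i \<in> I" "j \<notin> I" for i j
  proof -
    have "g j \<in> C" "p i \<in> span (p ` I)" using that g(1) D(1) by (auto simp: span_base)
    then show ?thesis by (simp add: C_def orthogonal_def)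
  qed
  have "p' i \<bullet> p' j = (if i = j then 1 else 0)" for i j
  proof (cases "i \<in> I"; cases "j \<in> I")
    assume "i \<in> I" "j \<in> I"
    then show ?thesis using p by (simp add: p'_def)
  next
    assume "i \<in> I" "j \<notin> I"
    then show ?thesis using cross by (auto simp: p'_def)
  next
    assume "i \<notin> I" "j \<in> I"
    then show ?thesis using cross[of j i] by (auto simp: p'_def inner_commute)
  next
    assume ij: "i \<notin> I" "j \<notin> I"
    then have "g i \<in> D" "g j \<in> D" "g i = g j \<longleftrightarrow> i = j" using g by (auto simp: inj_on_def)
    then show ?thesis using ij D(2,3) by (auto simp: p'_def pairwise_def orthogonal_def norm_eq_1)
  qed
  then show ?thesis by (intro that[of p']) (auto simp: p'_def)
qed

lemma orthonormal_family_matrix: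
  fixes u :: "'n::finite \<Rightarrow> real^'m"
  assumes "\<And>i j. u i \<bullet> u j = (if i = j then 1 else 0)"
  shows "transpose (\<chi> a j. u j $ a) ** (\<chi> a j. u j $ a) = mat 1"
proof -
  have "(transpose (\<chi> a j. u j $ a) ** (\<chi> a j. u j $ a)) $ i $ j = u i \<bullet> u j" for i j
    by (simp add: matrix_matrix_mult_def transpose_def inner_vec_def)
  then show ?thesis using assms by (simp add: vec_eq_iff mat_def)
qed

text \<open>The right singular vectors are eigenvectors of X^T X; the images X q_i are then pairwise
  orthogonal, and after normalisation are completed to an orthonormal family, which needs m \<ge> n.\<close>
theorem svd_exists:
  fixes X :: "real^'n^'m"
  assumes "CARD('n) \<le> CARD('m)"
  obtains P x Q where "is_svd X P x Q"
proof -
  have "transpose (transpose X ** X) = transpose X ** X"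
    by (simp add: matrix_transpose_mul)
  then obtain q :: "'n \<Rightarrow> real^'n" and \<mu> where
    q: "\<And>i j. q i \<bullet> q j = (if i = j then 1 else 0)"
    and eig: "\<And>i. (transpose X ** X) *v q i = \<mu> i *\<^sub>R q i"
    by (rule symmetric_matrix_orthonormal_eigenvectors) blast
  have image_orth: "(X *v q i) \<bullet> (X *v q j) = 0" if "i \<noteq> j" for i j
    using that q[of i j] eig[of j]
    by (simp add: matrix_vector_mult_adjoint matrix_vector_mul_assoc)
  define I where "I = {i. X *v q i \<noteq> 0}"
  define p where "p i = (1 / norm (X *v q i)) *\<^sub>R (X *v q i)" for i
  have "p i \<bullet> p j = (if i = j then 1 else 0)" if "i \<in> I" "j \<in> I" for i j
    using that image_orth[of i j] by (auto simp: p_def I_def dot_square_norm power2_eq_square)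
  then obtain p' where
    p': "\<And>i. i \<in> I \<Longrightarrow> p' i = p i" "\<And>i j. p' i \<bullet> p' j = (if i = j then 1 else 0)"
    using orthonormal_family_extend[OF assms] by metis
  define P where "P = ((\<chi> a j. p' j $ a) :: real^'n^'m)"
  define Q where "Q = ((\<chi> a j. q j $ a) :: real^'n^'n)"
  define x where "x = (\<chi> i. norm (X *v q i))"
  have PP: "transpose P ** P = mat 1" and QQ: "transpose Q ** Q = mat 1"
    unfolding P_def Q_def using p' q by (auto intro: orthonormal_family_matrix)
  have "X *v q j = x $ j *\<^sub>R p' j" for j
    by (cases "j \<in> I") (simp_all add: p' p_def x_def I_def)
  moreover have "(X ** Q) $ a $ j = (X *v q j) $ a" for a j
    by (simp add: matrix_matrix_mult_def matrix_vector_mult_def Q_def)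
  ultimately have "X ** Q = P ** Diag x"
    by (simp add: vec_eq_iff matrix_mul_Diag_component P_def mult.commute)
  moreover have "Q ** transpose Q = mat 1"
    using QQ orthogonal_matrix[of Q] by (simp add: orthogonal_matrix_def)
  ultimately have "X = P ** Diag x ** transpose Q"
    by (metis matrix_mul_assoc matrix_mul_rid)
  then show ?thesis
    using PP QQ by (intro that[of P x Q]) (simp add: is_svd_def x_def)
qed

text \<open>The first sum is the pairing of X with P Q^T, which the second bounds as in the trace
  inequality.\<close>
lemma sum_singular_values_le:
  assumes "is_svd X P x Q" "is_svd X U s V"
  shows "(\<Sum>i\<in>UNIV. x$i) \<le> (\<Sum>i\<in>UNIV. s$i)"
proof -
  have PQ: "transpose P ** P = mat 1" "transpose Q ** Q = mat 1"
    and UV: "transpose U ** U = mat 1" "transpose V ** V = mat 1" and s: "\<And>i. 0 \<le> s$i"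
    using assms by (auto simp: is_svd_def)
  define W where "W = P ** Diag (\<chi> i. 1) ** transpose Q"
  have "(\<Sum>i\<in>UNIV. x$i) = X \<bullet> W"
    using assms(1) inner_Diag_matrices_same_frame[OF PQ, of x "\<chi> i. 1"]
    by (simp add: is_svd_def W_def inner_vec_def)
  also have "\<dots> = (\<Sum>j\<in>UNIV. s$j * (\<Sum>i\<in>UNIV. (column j U \<bullet> column i P) * (column j V \<bullet> column i Q)))"
    using assms(2) by (simp add: is_svd_def W_def inner_Diag_matrices sum_distrib_left)
  also have "\<dots> \<le> (\<Sum>j\<in>UNIV. s$j * 1)"
  proof (intro sum_mono mult_left_mono)
    fix j
    have "(\<Sum>i\<in>UNIV. (column j U \<bullet> column i P) * (column j V \<bullet> column i Q))
        \<le> (\<Sum>i\<in>UNIV. ((column j U \<bullet> column i P)^2 + (column j V \<bullet> column i Q)^2) / 2)"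
      by (intro sum_mono mult_le_mean_squares)
    also have "\<dots> \<le> 1"
      using orthonormal_columns[OF PQ(1)] orthonormal_columns[OF PQ(2)]
        orthonormal_columns[OF UV(1)] orthonormal_columns[OF UV(2)]
      by (intro mean_squared_coefficients_le_1) auto
    finally show "(\<Sum>i\<in>UNIV. (column j U \<bullet> column i P) * (column j V \<bullet> column i Q)) \<le> 1" .
  qed (rule s)
  finally show ?thesis by simp
qed

lemma nuclear_norm_eq:
  assumes "is_svd X U s V"
  shows "nuclear_norm X = (\<Sum>i\<in>UNIV. s$i)"
proof -
  have "\<exists>U' s' V'. is_svd X U' s' V' \<and> nuclear_norm X = (\<Sum>i\<in>UNIV. s' $ i)"
    unfolding nuclear_norm_def by (rule someI_ex) (use assms in blast)
  then show ?thesis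
    using assms sum_singular_values_le by (metis order_antisym)
qed

section \<open>The two proximal problems\<close>

lemma continuous_attains_global_min:
  fixes f :: "'a::heine_borel \<Rightarrow> real"
  assumes "continuous_on UNIV f" "bounded {t. f t \<le> f c}"
  obtains m where "\<And>t. f m \<le> f t"
proof -
  define K where "K = {t. f t \<le> f c}"
  have "compact K"
    unfolding K_def compact_eq_bounded_closed using assms by (auto intro: closed_Collect_le)
  moreover have "c \<in> K" by (simp add: K_def)
  ultimately obtain m where "m \<in> K" "\<And>t. t \<in> K \<Longrightarrow> f m \<le> f t"
    using continuous_attains_inf[of K f] continuous_on_subset[OF assms(1)] by blast
  then have "f m \<le> f t" for t
    using \<open>c \<in> K\<close> by (cases "t \<in> K") (force simp: K_def)+
  then show ?thesis by (rule that)
qed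

lemma vec_obj_eq:
  "vec_obj lam \<sigma> s
    = ((norm s)^2 - 2 * (s \<bullet> \<sigma>) + (norm \<sigma>)^2) / 2 + lam * (l1_norm s - norm s)"
  by (simp add: vec_obj_def l2_norm_eq_norm power2_norm_eq_inner inner_diff_left inner_diff_right
      inner_commute)

lemma vec_obj_has_minimizer:
  assumes "0 \<le> lam"
  obtains m where "\<And>t. vec_obj lam \<sigma> m \<le> vec_obj lam \<sigma> t"
proof -
  have "continuous_on UNIV (vec_obj lam \<sigma>)"
    unfolding vec_obj_def l1_norm_def l2_norm_eq_norm by (intro continuous_intros)
  moreover have "(norm (t - \<sigma>))^2 / 2 \<le> vec_obj lam \<sigma> t" for t
    using assms norm_le_l1_cart[of t] by (simp add: vec_obj_def l2_norm_eq_norm l1_norm_def)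
  then have "norm (t - \<sigma>) \<le> sqrt (2 * vec_obj lam \<sigma> \<sigma>)"
    if "vec_obj lam \<sigma> t \<le> vec_obj lam \<sigma> \<sigma>" for t
    using that[THEN order_trans[OF \<open>(norm (t - \<sigma>))^2 / 2 \<le> vec_obj lam \<sigma> t\<close>]]
    by (intro real_le_rsqrt) simp
  then have "{t. vec_obj lam \<sigma> t \<le> vec_obj lam \<sigma> \<sigma>}
      \<subseteq> cball \<sigma> (sqrt (2 * vec_obj lam \<sigma> \<sigma>))"
    by (auto simp: dist_norm norm_minus_commute)
  then have "bounded {t. vec_obj lam \<sigma> t \<le> vec_obj lam \<sigma> \<sigma>}"
    using bounded_cball bounded_subset by blast
  ultimately show ?thesis
    using continuous_attains_global_min that by blast
qed

lemma vec_obj_abs_le: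
  assumes "\<And>i. 0 \<le> \<sigma>$i"
  shows "vec_obj lam \<sigma> (\<chi> i. \<bar>s$i\<bar>) \<le> vec_obj lam \<sigma> s"
proof -
  have "(\<chi> i. \<bar>s$i\<bar>) \<bullet> (\<chi> i. \<bar>s$i\<bar>) = s \<bullet> s" "l1_norm (\<chi> i. \<bar>s$i\<bar>) = l1_norm s"
    by (simp_all add: inner_vec_def l1_norm_def)
  moreover have "s \<bullet> \<sigma> \<le> (\<chi> i. \<bar>s$i\<bar>) \<bullet> \<sigma>"
    unfolding inner_vec_def using assms by (intro sum_mono) (simp add: mult_right_mono)
  ultimately show ?thesis
    by (simp add: vec_obj_eq norm_eq_sqrt_inner)
qed

lemma permute_vec_invariants:
  fixes x :: "real^'n"
  assumes "bij \<pi>"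
  shows "norm (\<chi> k. x $ \<pi> k) = norm x" "l1_norm (\<chi> k. x $ \<pi> k) = l1_norm x"
  using sum_permute_UNIV[OF assms, of "\<lambda>i. x$i * x$i"]
    sum_permute_UNIV[OF assms, of "\<lambda>i. \<bar>x$i\<bar>"]
  by (simp_all add: norm_eq_sqrt_inner inner_vec_def l1_norm_def)

lemma vec_obj_sort_le:
  fixes a \<sigma> :: "real^'n::{finite,linorder}"
  assumes "\<And>i. 0 \<le> a$i" "bij \<pi>" "antimono (\<lambda>k. a $ \<pi> k)"
    and "antimono (\<lambda>k. \<sigma>$k)" "\<And>i. 0 \<le> \<sigma>$i"
  shows "vec_obj lam \<sigma> (\<chi> k. a $ \<pi> k) \<le> vec_obj lam \<sigma> a"
proof -
  have "a \<bullet> \<sigma> \<le> (\<chi> k. a $ \<pi> k) \<bullet> \<sigma>"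
    using rearrangement_inequality[of "\<lambda>i. a$i" \<pi> "\<lambda>i. \<sigma>$i"] assms
    by (simp add: inner_vec_def comp_def)
  then show ?thesis
    by (simp add: vec_obj_eq permute_vec_invariants[OF assms(2)])
qed

lemma vec_obj_has_sorted_minimizer:
  fixes \<sigma> :: "real^'n::{finite,linorder}"
  assumes "0 \<le> lam" "antimono (\<lambda>k. \<sigma>$k)" "\<And>i. 0 \<le> \<sigma>$i"
  obtains s
  where "\<And>t. vec_obj lam \<sigma> s \<le> vec_obj lam \<sigma> t" "antimono (\<lambda>k. s$k)" "\<And>i. 0 \<le> s$i"
proof -
  obtain m where m: "\<And>t. vec_obj lam \<sigma> m \<le> vec_obj lam \<sigma> t"
    using vec_obj_has_minimizer[OF assms(1)] by blast
  define a where "a = (\<chi> i. \<bar>m$i\<bar>)"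
  obtain \<pi> :: "'n \<Rightarrow> 'n" where \<pi>: "bij \<pi>" "antimono ((\<lambda>i. a$i) \<circ> \<pi>)"
    using sorting_permutation_exists by blast
  have "vec_obj lam \<sigma> (\<chi> k. a $ \<pi> k) \<le> vec_obj lam \<sigma> a"
    using \<pi> assms(2,3) by (intro vec_obj_sort_le) (auto simp: a_def comp_def)
  also have "\<dots> \<le> vec_obj lam \<sigma> m"
    unfolding a_def using assms(3) by (rule vec_obj_abs_le)
  finally have "vec_obj lam \<sigma> (\<chi> k. a $ \<pi> k) \<le> vec_obj lam \<sigma> m" .
  then show ?thesis
  proof (rule that[OF order_trans[OF _ m]])
    show "antimono (\<lambda>k. (\<chi> k. a $ \<pi> k) $ k)" using \<pi>(2) by (simp add: comp_def)
  qed (simp add: a_def)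
qed

lemma mat_obj_eq:
  assumes "is_svd X P x Q"
  shows "mat_obj lam Z X
    = ((norm x)^2 - 2 * (X \<bullet> Z) + (norm Z)^2) / 2 + lam * (l1_norm x - norm x)"
proof -
  have "norm X = norm x"
    using assms norm_Diag_matrix by (auto simp: is_svd_def)
  moreover have "nuclear_norm X = l1_norm x"
    using assms nuclear_norm_eq[OF assms] by (simp add: is_svd_def l1_norm_def)
  moreover have "(norm (X - Z))^2 = (norm X)^2 - 2 * (X \<bullet> Z) + (norm Z)^2"
    by (simp add: power2_norm_eq_inner inner_diff_left inner_diff_right inner_commute)
  ultimately show ?thesis
    by (simp add: mat_obj_def frob_norm_eq_norm)
qed

lemma mat_obj_Diag_matrix:
  fixes U :: "real^'n^'m" and V :: "real^'n^'n"
  assumes "transpose U ** U = mat 1" "transpose V ** V = mat 1" "\<And>i. 0 \<le> s$i"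
  shows "mat_obj lam (U ** Diag \<sigma> ** transpose V) (U ** Diag s ** transpose V) = vec_obj lam \<sigma> s"
proof -
  have "is_svd (U ** Diag s ** transpose V) U s V"
    using assms by (simp add: is_svd_def)
  then show ?thesis
    using assms
    by (simp add: nuclear_norm_eq mat_obj_def vec_obj_def is_svd_def frob_norm_eq_norm
        l2_norm_eq_norm l1_norm_def Diag_matrix_diff norm_Diag_matrix)
qed

lemma vec_obj_le_mat_obj:
  fixes P U :: "((real, 'n::{finite,linorder}) vec, 'm::finite) vec"
  assumes "is_svd X P x Q" "transpose U ** U = mat 1" "transpose V ** V = mat 1"
    and "antimono (\<lambda>k. \<sigma>$k)" "\<And>i. 0 \<le> \<sigma>$i"
  obtains y where "vec_obj lam \<sigma> y \<le> mat_obj lam (U ** Diag \<sigma> ** transpose V) X"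
proof -
  obtain \<pi> :: "'n \<Rightarrow> 'n" where \<pi>: "bij \<pi>" "antimono ((\<lambda>i. x$i) \<circ> \<pi>)"
    using sorting_permutation_exists by blast
  define y where "y = (\<chi> k. x $ \<pi> k)"
  have "X \<bullet> (U ** Diag \<sigma> ** transpose V) \<le> y \<bullet> \<sigma>"
    using assms \<pi> von_neumann_trace_inequality[of P Q U V x \<pi> \<sigma>]
    by (simp add: is_svd_def y_def inner_vec_def comp_def)
  then have "vec_obj lam \<sigma> y \<le> mat_obj lam (U ** Diag \<sigma> ** transpose V) X"
    by (simp add: vec_obj_eq mat_obj_eq[OF assms(1)] y_def permute_vec_invariants[OF \<pi>(1)]
        norm_Diag_matrix[OF assms(2,3)])
  then show ?thesis by (rule that)
qed

theorem proposition2: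
  fixes Z U :: "((real, 'n::{finite,linorder}) vec, 'm::finite) vec"
    and V :: "((real, 'n) vec, 'n) vec" and sigma :: "(real, 'n) vec" and lam :: real
  assumes "card (UNIV::'n set) \<le> card (UNIV::'m set)"
    and "transpose U ** U = mat 1"
    and "transpose V ** V = mat 1"
    and "\<forall>i j. i \<le> j \<longrightarrow> sigma $ j \<le> sigma $ i"
    and "\<forall>i. 0 \<le> sigma $ i"
    and "Z = U ** Diag sigma ** transpose V"
    and "0 < lam" and "lam \<le> sigma $ (LEAST i. True)"
  shows "(\<exists>s. (\<forall>t. vec_obj lam sigma s \<le> vec_obj lam sigma t)
              \<and> (\<forall>i j. i \<le> j \<longrightarrow> s $ j \<le> s $ i) \<and> (\<forall>i. 0 \<le> s $ i))
    \<and> (\<forall>s. (\<forall>t. vec_obj lam sigma s \<le> vec_obj lam sigma t)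
              \<and> (\<forall>i j. i \<le> j \<longrightarrow> s $ j \<le> s $ i) \<and> (\<forall>i. 0 \<le> s $ i)
           \<longrightarrow> (\<forall>X. mat_obj lam Z (U ** Diag s ** transpose V) \<le> mat_obj lam Z X))
    \<and> (INF s. vec_obj lam sigma s) = (INF X. mat_obj lam Z X)"
proof -
  \<comment> \<open>The bound lam \<le> sigma_1 only makes the minimiser nonzero.\<close>
  have \<sigma>: "antimono (\<lambda>k. sigma $ k)" "\<And>i. 0 \<le> sigma $ i" and "0 \<le> lam"
    using assms(4,5,7) by (auto simp: antimono_def)
  have optimal: "mat_obj lam Z (U ** Diag s ** transpose V) \<le> mat_obj lam Z X"
    if s: "\<And>t. vec_obj lam sigma s \<le> vec_obj lam sigma t" "\<And>i. 0 \<le> s $ i" for s X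
  proof -
    obtain P x Q where "is_svd X P x Q"
      using svd_exists[OF assms(1)] .
    then obtain y where "vec_obj lam sigma y \<le> mat_obj lam Z X"
      using vec_obj_le_mat_obj[OF _ assms(2,3) \<sigma>] assms(6) by metis
    then show ?thesis
      using s mat_obj_Diag_matrix[OF assms(2,3) s(2)] assms(6) by (metis order_trans)
  qed
  obtain s where s: "\<And>t. vec_obj lam sigma s \<le> vec_obj lam sigma t" "antimono (\<lambda>k. s $ k)"
    "\<And>i. 0 \<le> s $ i"
    using vec_obj_has_sorted_minimizer[OF \<open>0 \<le> lam\<close> \<sigma>] by blast
  have "(INF t. vec_obj lam sigma t) = vec_obj lam sigma s"
    by (rule cInf_eq_minimum) (use s in auto)
  also have "\<dots> = mat_obj lam Z (U ** Diag s ** transpose V)"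
    using mat_obj_Diag_matrix[OF assms(2,3) s(3)] assms(6) by simp
  also have "\<dots> = (INF X. mat_obj lam Z X)"
    by (rule cInf_eq_minimum[symmetric]) (use optimal s in auto)
  finally show ?thesis
    using s optimal by (auto simp: antimono_def)
qed

end
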